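(* Let $\mathcal X=\mathbb R$, let $\mathbb E[X^2]<\infty$, let $\Delta(x,\hat x)=(x-\hat x)^2$, and let $$d(p_X,p_{\hat X})=W_2^2(p_X,p_{\hat X}):=\inf_{p_{X\hat X}\in\Pi(p_X,p_{\hat X})}\mathbb E[(X-\hat X)^2].$$ Then both of the following hold. - For every $D>0$ and $P>0$, $R(D,P)<\infty$. - For every $D>0$, $P>0$ and $\epsilon>0$ there is a kernel $p_{\tilde X|X}$ such that $\tilde X$ is discrete with finite support $\tilde{\mathcal X}\subseteq\mathbb R$ and all of the following hold: - $I(X;\tilde X)\le R(D,P)+\epsilon$; - $\mathbb E[(X-\tilde X)^2]\le D+\epsilon$; - $\mathbb E[\max_{\tilde x\in\tilde{\mathcal X}}(X-\tilde x)^2]<\infty$; - $W_2^2(p_X,p_{\tilde X})\le P+\epsilon$; - $W_2^2(p_X,\gamma)<\infty$ for every distribution $\gamma$ supported on $\tilde{\mathcal X}$.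
   Context: The rate-distortion-perception function is $$R(D,P):=\inf I(X;\hat X),$$ where the infimum is over kernels $p_{\hat X|X}$ from $\mathbb R$ to $\mathbb R$ with $\mathbb E[\Delta(X,\hat X)]\le D$ and $d(p_X,p_{\hat X})\le P$. $\Pi(\mu,\nu)$ is the set of couplings of $\mu$ and $\nu$. *)

theory Defs
  imports "HOL-Probability.Probability"
begin

text \<open>If P is not absolutely continuous w.r.t. Q, it is infinite. Otherwise, with f = dP/dQ,
  it is the Lebesgue integral of f ln f w.r.t. Q (the negative part of f ln f is bounded
  by 1/e, so the integral is well defined in (-inf, inf]).\<close>
definition KL_div :: "'a measure \<Rightarrow> 'a measure \<Rightarrow> ereal" where
  "KL_div P Q =
    (if sets P = sets Q \<and> absolutely_continuous Q P then
       (let f = (\<lambda>x. enn2real (RN_deriv Q P x)) in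
          enn2ereal (\<integral>\<^sup>+ x. ennreal (f x * ln (f x)) \<partial>Q)
        - enn2ereal (\<integral>\<^sup>+ x. ennreal (- (f x * ln (f x))) \<partial>Q))
     else \<infinity>)"

definition mutual_info_joint :: "(real \<times> real) measure \<Rightarrow> ereal" where
  "mutual_info_joint J = KL_div J (distr J borel fst \<Otimes>\<^sub>M distr J borel snd)"

definition kernels :: "(real \<Rightarrow> real measure) set" where
  "kernels = borel \<rightarrow>\<^sub>M prob_algebra borel"

definition joint :: "real measure \<Rightarrow> (real \<Rightarrow> real measure) \<Rightarrow> (real \<times> real) measure" where
  "joint \<mu> K = \<mu> \<bind> (\<lambda>x. distr (K x) (borel \<Otimes>\<^sub>M borel) (\<lambda>y. (x, y)))"

definition out_law :: "real measure \<Rightarrow> (real \<Rightarrow> real measure) \<Rightarrow> real measure" where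
  "out_law \<mu> K = distr (joint \<mu> K) borel snd"

definition MI :: "real measure \<Rightarrow> (real \<Rightarrow> real measure) \<Rightarrow> ereal" where
  "MI \<mu> K = mutual_info_joint (joint \<mu> K)"

definition distortion :: "real measure \<Rightarrow> (real \<Rightarrow> real measure) \<Rightarrow> ennreal" where
  "distortion \<mu> K = (\<integral>\<^sup>+ z. ennreal ((fst z - snd z)\<^sup>2) \<partial>(joint \<mu> K))"

definition couplings :: "real measure \<Rightarrow> real measure \<Rightarrow> (real \<times> real) measure set" where
  "couplings \<mu> \<nu> = {\<pi>. prob_space \<pi> \<and> sets \<pi> = sets (borel \<Otimes>\<^sub>M borel)
                        \<and> distr \<pi> borel fst = \<mu> \<and> distr \<pi> borel snd = \<nu>}"

definition W2sq :: "real measure \<Rightarrow> real measure \<Rightarrow> ennreal" where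
  "W2sq \<mu> \<nu> = (INF \<pi> \<in> couplings \<mu> \<nu>. \<integral>\<^sup>+ z. ennreal ((fst z - snd z)\<^sup>2) \<partial>\<pi>)"

definition RDP :: "real measure \<Rightarrow> real \<Rightarrow> real \<Rightarrow> ereal" where
  "RDP \<mu> D P = (INF K \<in> {K \<in> kernels. distortion \<mu> K \<le> ennreal D \<and> W2sq \<mu> (out_law \<mu> K) \<le> ennreal P}.
                  MI \<mu> K)"

end

theory Submission
  imports Defs
begin

text \<open>Post-processing the output of any kernel by a quantizer g with finite range (rounding to
  a fine grid on a large interval, the tail sent to 0) does not increase the mutual information,
  by the data processing inequality, and, since the output has a finite second moment, increases
  the distortion and the W2^2 distance to the source by arbitrarily little. Applied to a
  near-optimal kernel this gives the required kernel with finite output; applied to the identity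
  kernel it gives a feasible kernel with finite output, whose mutual information is finite, so
  R(D, P) is finite.\<close>

section \<open>Relative entropy through the function psi\<close>

text \<open>Since a density f = dJ/dQ of probability measures integrates to 1, the relative entropy
  KL(J || Q) is the Q-integral of the nonnegative convex function psi applied to f.\<close>

definition psi :: "real \<Rightarrow> real" where "psi s = s * ln s - s + 1"

lemma psi_measurable [measurable]: "psi \<in> borel_measurable borel"
  unfolding psi_def by measurable

lemma psi_ge_tangent:
  assumes "s \<ge> 0" "c > 0"
  shows "psi c + ln c * (s - c) \<le> psi s"
proof (cases "s = 0")
  case True
  then show ?thesis using assms by (simp add: psi_def)
next
  case False
  with assms have s: "s > 0" by auto
  have "ln c - ln s \<le> c / s - 1"
    using ln_le_minus_one[of "c / s"] s assms by (simp add: ln_div)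
  then have "s * (ln c - ln s) \<le> s * (c / s - 1)"
    using s by (intro mult_left_mono) auto
  also have "s * (c / s - 1) = c - s"
    using s by (simp add: field_simps)
  finally show ?thesis by (simp add: psi_def algebra_simps)
qed

lemma psi_nonneg: "s \<ge> 0 \<Longrightarrow> psi s \<ge> 0"
  using psi_ge_tangent[of s 1] by (simp add: psi_def)

lemma mult_psi_divide_le:
  assumes k: "0 \<le> k" "k \<le> 1" and c: "0 < c" "c \<le> 1"
  shows "c * psi (k / c) \<le> 1 + \<bar>ln c\<bar>"
proof (cases "k = 0")
  case True
  then have "c * psi (k / c) = c" by (simp add: psi_def)
  moreover have "ln c \<le> 0" using c by simp
  ultimately show ?thesis using c by linarith
next
  case False
  have "c * psi (k / c) = k * ln k - k * ln c - k + c"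
    using k c False by (simp add: psi_def ln_div field_simps)
  moreover have "k * ln k \<le> 0"
    using k False by (intro mult_nonneg_nonpos) auto
  moreover have "- k * ln c \<le> \<bar>ln c\<bar>"
    using mult_mono[OF k(2) order_refl, of "- ln c"] c by (auto simp: abs_if)
  ultimately show ?thesis using c k by linarith
qed

lemma ennreal_psi_split:
  fixes s :: real
  assumes "s \<ge> 0"
  shows "ennreal (psi s) + ennreal (- (s * ln s)) + ennreal s = ennreal (s * ln s) + 1"
proof (cases "s * ln s \<ge> 0")
  case True
  have "ennreal (psi s) + ennreal s = ennreal (psi s + s)"
    using psi_nonneg[OF assms] assms by (simp add: ennreal_plus)
  also have "psi s + s = s * ln s + 1" by (simp add: psi_def)
  finally show ?thesis using True by (simp add: ennreal_plus ennreal_neg)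
next
  case False
  have "ennreal (psi s) + ennreal (- (s * ln s)) + ennreal s = ennreal (psi s + (- (s * ln s)) + s)"
    using psi_nonneg[OF assms] assms False by (simp only: ennreal_plus[symmetric] add_nonneg_nonneg)
  also have "psi s + (- (s * ln s)) + s = 1" by (simp add: psi_def)
  finally show ?thesis using False by (simp add: ennreal_neg)
qed

lemma KL_div_eq_nn_integral_psi:
  assumes J: "prob_space J" and Q: "prob_space Q" and sets: "sets J = sets Q"
    and ac: "absolutely_continuous Q J"
  shows "KL_div J Q = enn2ereal (\<integral>\<^sup>+x. ennreal (psi (enn2real (RN_deriv Q J x))) \<partial>Q)"
proof -
  interpret Q: prob_space Q by fact
  interpret J: prob_space J by fact
  define f where "f x = enn2real (RN_deriv Q J x)" for x
  have [measurable]: "f \<in> borel_measurable Q" unfolding f_def by measurable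
  have fnn: "f x \<ge> 0" for x unfolding f_def by simp
  have fin: "AE x in Q. RN_deriv Q J x \<noteq> \<infinity>"
    by (rule Q.RN_deriv_finite) (auto simp: ac sets J.sigma_finite_measure_axioms)
  have "(\<integral>\<^sup>+x. ennreal (f x) \<partial>Q) = (\<integral>\<^sup>+x. RN_deriv Q J x * 1 \<partial>Q)"
    using fin by (intro nn_integral_cong_AE) (auto simp: f_def less_top)
  also have "\<dots> = (\<integral>\<^sup>+x. 1 \<partial>J)"
    by (rule Q.RN_deriv_nn_integral[symmetric]) (auto simp: ac sets)
  finally have int1: "(\<integral>\<^sup>+x. ennreal (f x) \<partial>Q) = 1"
    by (simp add: J.emeasure_space_1)
  \<comment> \<open>KL_div J Q is C - B; since f integrates to 1, ennreal_psi_split gives A + B = C\<close>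
  define A where "A = (\<integral>\<^sup>+x. ennreal (psi (f x)) \<partial>Q)"
  define B where "B = (\<integral>\<^sup>+x. ennreal (- (f x * ln (f x))) \<partial>Q)"
  define C where "C = (\<integral>\<^sup>+x. ennreal (f x * ln (f x)) \<partial>Q)"
  have "A + B + 1 = (\<integral>\<^sup>+x. ennreal (psi (f x)) + ennreal (- (f x * ln (f x))) + ennreal (f x) \<partial>Q)"
    unfolding A_def B_def int1[symmetric] by (simp add: nn_integral_add psi_def)
  also have "\<dots> = (\<integral>\<^sup>+x. ennreal (f x * ln (f x)) + 1 \<partial>Q)"
    using ennreal_psi_split[OF fnn] by simp
  also have "\<dots> = C + 1" unfolding C_def by (simp add: nn_integral_add Q.emeasure_space_1)
  finally have "1 + (A + B) = 1 + C" by (simp add: ac_simps)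
  then have ABC: "A + B = C" by (simp add: ennreal_add_left_cancel)
  have "B \<le> (\<integral>\<^sup>+x. 1 \<partial>Q)" unfolding B_def
  proof (intro nn_integral_mono)
    fix x
    have "- (f x * ln (f x)) \<le> 1"
      using psi_nonneg[OF fnn[of x]] fnn[of x] by (simp add: psi_def)
    then show "ennreal (- (f x * ln (f x))) \<le> 1" by (simp add: ennreal_le_1)
  qed
  then have Bfin: "B \<noteq> \<infinity>" using Q.emeasure_space_1 by (auto simp: top_unique)
  have "KL_div J Q = enn2ereal C - enn2ereal B"
    unfolding KL_div_def using sets ac by (simp add: Let_def C_def B_def f_def)
  also have "\<dots> = enn2ereal A + enn2ereal B - enn2ereal B"
    unfolding ABC[symmetric] by (simp add: plus_ennreal.rep_eq)
  also have "\<dots> = enn2ereal A"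
    using Bfin by (cases "enn2ereal A"; cases "enn2ereal B") auto
  finally show ?thesis unfolding A_def f_def .
qed

lemma KL_div_nonneg:
  assumes "prob_space J" "prob_space Q" "sets J = sets Q"
  shows "0 \<le> KL_div J Q"
proof (cases "absolutely_continuous Q J")
  case True
  then show ?thesis using KL_div_eq_nn_integral_psi[OF assms True] by simp
next
  case False
  then show ?thesis by (simp add: KL_div_def)
qed

lemma KL_div_density:
  assumes Q: "prob_space Q" and f[measurable]: "f \<in> borel_measurable Q" and fnn: "\<And>z. f z \<ge> 0"
    and J: "prob_space (density Q (\<lambda>z. ennreal (f z)))"
  shows "KL_div (density Q (\<lambda>z. ennreal (f z))) Q = enn2ereal (\<integral>\<^sup>+z. ennreal (psi (f z)) \<partial>Q)"
proof -
  interpret Q: prob_space Q by fact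
  have "AE z in Q. ennreal (f z) = RN_deriv Q (density Q (\<lambda>z. ennreal (f z))) z"
    by (rule Q.RN_deriv_unique) simp_all
  then have "(\<integral>\<^sup>+z. ennreal (psi (enn2real (RN_deriv Q (density Q (\<lambda>z. ennreal (f z))) z))) \<partial>Q)
      = (\<integral>\<^sup>+z. ennreal (psi (f z)) \<partial>Q)"
  proof (intro nn_integral_cong_AE, eventually_elim)
    case (elim z)
    then show ?case using fnn[of z] by (metis enn2real_ennreal)
  qed
  then show ?thesis
    using absolutely_continuousI_density[of "\<lambda>z. ennreal (f z)"]
    by (subst KL_div_eq_nn_integral_psi[OF J Q]) simp_all
qed

section \<open>Markov kernels\<close>

lemma kernels_prob_algebra: "K \<in> kernels \<Longrightarrow> K x \<in> space (prob_algebra borel)"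
  unfolding kernels_def by (auto dest: measurable_space)

lemma sets_kernel: "K \<in> kernels \<Longrightarrow> sets (K x) = sets borel"
  using kernels_prob_algebra[of K x] by (simp add: space_prob_algebra)

lemma space_kernel: "K \<in> kernels \<Longrightarrow> space (K x) = UNIV"
  using sets_kernel[of K x] sets_eq_imp_space_eq by fastforce

lemma prob_space_kernel: "K \<in> kernels \<Longrightarrow> prob_space (K x)"
  using kernels_prob_algebra[of K x] by (simp add: space_prob_algebra)

lemma emeasure_kernel_eq_measure: "K \<in> kernels \<Longrightarrow> emeasure (K x) A = measure (K x) A"
  using prob_space_kernel[of K x] by (simp add: prob_space_def finite_measure.emeasure_eq_measure)

lemma measurable_kernel_cong: "K \<in> kernels \<Longrightarrow> measurable (K x) N = measurable borel N"
  by (rule measurable_cong_sets[OF sets_kernel refl])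

lemma measurable_kernel_emeasure [measurable]:
  assumes K: "K \<in> kernels" and B: "B \<in> sets borel"
  shows "(\<lambda>x. emeasure (K x) B) \<in> borel_measurable borel"
  using measurable_compose[OF measurable_prob_algebraD[OF K[unfolded kernels_def]]
      measurable_emeasure_subprob_algebra[OF B]]
  by (simp add: comp_def)

lemma measurable_kernel_measure [measurable]:
  assumes K: "K \<in> kernels" and B: "B \<in> sets borel"
  shows "(\<lambda>x. measure (K x) B) \<in> borel_measurable borel"
  using measurable_compose[OF K[unfolded kernels_def] measurable_measure_prob_algebra[OF B]]
  by (simp add: comp_def)

lemma measurable_kernel_Pair:
  assumes K: "K \<in> kernels"
  shows "(\<lambda>x. distr (K x) (borel \<Otimes>\<^sub>M borel) (Pair x))
           \<in> (borel :: real measure) \<rightarrow>\<^sub>M prob_algebra (borel \<Otimes>\<^sub>M (borel :: real measure))"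
proof (rule measurable_prob_algebraI)
  fix x :: real
  interpret prob_space "K x" using prob_space_kernel[OF K] .
  show "prob_space (distr (K x) (borel \<Otimes>\<^sub>M borel) (Pair x))"
    by (rule prob_space_distr) (simp add: measurable_kernel_cong[OF K])
next
  have "K \<in> borel \<rightarrow>\<^sub>M subprob_algebra borel"
    using K unfolding kernels_def by (rule measurable_prob_algebraD)
  then show "(\<lambda>x. distr (K x) (borel \<Otimes>\<^sub>M borel) (Pair x)) \<in> borel \<rightarrow>\<^sub>M subprob_algebra (borel \<Otimes>\<^sub>M borel)"
    by (rule measurable_distr2[rotated]) simp
qed

lemma emeasure_kernel_compl:
  assumes K: "K \<in> kernels" and B: "B \<in> sets borel" and "emeasure (K x) B = 1"
  shows "emeasure (K x) (UNIV - B) = 0"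
proof -
  interpret prob_space "K x" using prob_space_kernel[OF K] .
  show ?thesis using assms prob_compl[of B] sets_kernel[OF K] space_kernel[OF K]
    by (simp add: emeasure_eq_measure)
qed

lemma return_kernel: "return borel \<in> kernels"
  unfolding kernels_def by (rule measurable_return_prob_space)

definition map_kernel :: "(real \<Rightarrow> real measure) \<Rightarrow> (real \<Rightarrow> real) \<Rightarrow> real \<Rightarrow> real measure" where
  "map_kernel K g = (\<lambda>x. distr (K x) borel g)"

lemma map_kernel_kernels: "K \<in> kernels \<Longrightarrow> g \<in> borel_measurable borel \<Longrightarrow> map_kernel K g \<in> kernels"
  unfolding map_kernel_def kernels_def
  by (rule measurable_compose[OF _ measurable_distr_prob_space]) auto

lemma emeasure_map_kernel:
  "K \<in> kernels \<Longrightarrow> g \<in> borel_measurable borel \<Longrightarrow> B \<in> sets borel \<Longrightarrow>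
   emeasure (map_kernel K g x) B = emeasure (K x) (g -` B)"
  unfolding map_kernel_def
  by (subst emeasure_distr) (auto simp: measurable_kernel_cong space_kernel)

lemma measure_map_kernel:
  "K \<in> kernels \<Longrightarrow> g \<in> borel_measurable borel \<Longrightarrow> B \<in> sets borel \<Longrightarrow>
   measure (map_kernel K g x) B = measure (K x) (g -` B)"
  unfolding map_kernel_def
  by (subst measure_distr) (auto simp: measurable_kernel_cong space_kernel)

lemma nn_integral_map_kernel:
  "K \<in> kernels \<Longrightarrow> g \<in> borel_measurable borel \<Longrightarrow> h \<in> borel_measurable borel \<Longrightarrow>
   (\<integral>\<^sup>+y. h y \<partial>map_kernel K g x) = (\<integral>\<^sup>+y. h (g y) \<partial>K x)"
  unfolding map_kernel_def
  by (subst nn_integral_distr) (auto simp: measurable_kernel_cong space_kernel)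

lemma emeasure_map_kernel_range:
  assumes K: "K \<in> kernels" and g: "g \<in> borel_measurable borel" and T: "finite (range g)"
  shows "emeasure (map_kernel K g x) (range g) = 1"
proof -
  have "emeasure (map_kernel K g x) (range g) = emeasure (K x) UNIV"
    using T by (simp add: emeasure_map_kernel[OF K g] finite_imp_closed vimage_def)
  then show ?thesis
    using prob_space.emeasure_space_1[OF prob_space_kernel[OF K]] space_kernel[OF K] by simp
qed

section \<open>Joint and output laws of a source and a kernel\<close>

context real_distribution
begin

lemma M_prob_algebra: "M \<in> space (prob_algebra borel)"
  by (simp add: space_prob_algebra prob_space_axioms)

lemma joint_prob_algebra: "K \<in> kernels \<Longrightarrow> joint M K \<in> space (prob_algebra (borel \<Otimes>\<^sub>M borel))"
  unfolding joint_def space_prob_algebra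
  using prob_space_bind'[OF M_prob_algebra measurable_kernel_Pair]
    sets_bind'[OF M_prob_algebra measurable_kernel_Pair]
  by auto

lemma prob_space_joint: "K \<in> kernels \<Longrightarrow> prob_space (joint M K)"
  using joint_prob_algebra by (simp add: space_prob_algebra)

lemma sets_joint: "K \<in> kernels \<Longrightarrow> sets (joint M K) = sets (borel \<Otimes>\<^sub>M borel)"
  using joint_prob_algebra by (simp add: space_prob_algebra)

lemma measurable_joint_cong: "K \<in> kernels \<Longrightarrow> measurable (joint M K) N = measurable (borel \<Otimes>\<^sub>M borel) N"
  by (rule measurable_cong_sets[OF sets_joint refl])

lemma emeasure_joint:
  assumes K: "K \<in> kernels" and C: "C \<in> sets (borel \<Otimes>\<^sub>M borel)"
  shows "emeasure (joint M K) C = (\<integral>\<^sup>+x. emeasure (K x) (Pair x -` C) \<partial>M)"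
  unfolding joint_def
  by (subst emeasure_bind_prob_algebra[OF M_prob_algebra measurable_kernel_Pair[OF K] C])
     (auto intro!: nn_integral_cong simp: emeasure_distr space_kernel[OF K]
       measurable_kernel_cong[OF K] C)

lemma nn_integral_joint:
  assumes K: "K \<in> kernels" and h: "h \<in> borel_measurable (borel \<Otimes>\<^sub>M borel)"
  shows "(\<integral>\<^sup>+z. h z \<partial>joint M K) = (\<integral>\<^sup>+x. \<integral>\<^sup>+y. h (x, y) \<partial>K x \<partial>M)"
proof -
  have N: "(\<lambda>x. distr (K x) (borel \<Otimes>\<^sub>M borel) (Pair x)) \<in> M \<rightarrow>\<^sub>M subprob_algebra (borel \<Otimes>\<^sub>M borel)"
    using measurable_prob_algebraD[OF measurable_kernel_Pair[OF K]] by simp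
  show ?thesis
    unfolding joint_def nn_integral_bind[OF h N]
    by (auto intro!: nn_integral_cong simp: nn_integral_distr measurable_kernel_cong[OF K] h)
qed

lemma distr_joint_fst: assumes K: "K \<in> kernels" shows "distr (joint M K) borel fst = M"
proof (rule measure_eqI)
  fix A assume "A \<in> sets (distr (joint M K) borel fst)"
  then have A: "A \<in> sets borel" by simp
  have "emeasure (distr (joint M K) borel fst) A = emeasure (joint M K) (A \<times> UNIV)"
    using A by (subst emeasure_distr)
      (auto simp: measurable_joint_cong[OF K] sets_eq_imp_space_eq[OF sets_joint[OF K]]
        space_pair_measure intro!: arg_cong[where f="emeasure (joint M K)"])
  also have "\<dots> = (\<integral>\<^sup>+x. emeasure (K x) (Pair x -` (A \<times> UNIV)) \<partial>M)"
    using A by (intro emeasure_joint K) auto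
  also have "\<dots> = (\<integral>\<^sup>+x. indicator A x \<partial>M)"
    using prob_space.emeasure_space_1[OF prob_space_kernel[OF K]] space_kernel[OF K]
    by (intro nn_integral_cong) (auto simp: indicator_def)
  finally show "emeasure (distr (joint M K) borel fst) A = emeasure M A"
    using A by simp
qed simp

lemma real_distribution_out_law: "K \<in> kernels \<Longrightarrow> real_distribution (out_law M K)"
  unfolding out_law_def
  by (rule prob_space.real_distribution_distr[OF prob_space_joint]) (simp_all add: measurable_joint_cong)

lemma prob_space_out_law: "K \<in> kernels \<Longrightarrow> prob_space (out_law M K)"
  using real_distribution_out_law real_distribution_def by blast

lemma sets_out_law [simp]: "sets (out_law M K) = sets borel"
  by (simp add: out_law_def)

lemma emeasure_out_law:
  assumes K: "K \<in> kernels" and B: "B \<in> sets borel"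
  shows "emeasure (out_law M K) B = (\<integral>\<^sup>+x. emeasure (K x) B \<partial>M)"
proof -
  have "emeasure (out_law M K) B = emeasure (joint M K) (UNIV \<times> B)"
    unfolding out_law_def using B
    by (subst emeasure_distr)
      (auto simp: measurable_joint_cong[OF K] sets_eq_imp_space_eq[OF sets_joint[OF K]]
        space_pair_measure intro!: arg_cong[where f="emeasure (joint M K)"])
  then show ?thesis using B by (simp add: emeasure_joint[OF K])
qed

lemma out_law_map_kernel:
  assumes K: "K \<in> kernels" and g: "g \<in> borel_measurable borel"
  shows "out_law M (map_kernel K g) = distr (out_law M K) borel g"
proof (rule measure_eqI)
  fix B assume "B \<in> sets (out_law M (map_kernel K g))"
  then have B: "B \<in> sets borel" by simp
  then have "g -` B \<in> sets borel" using g by (auto simp: measurable_def)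
  then show "emeasure (out_law M (map_kernel K g)) B = emeasure (distr (out_law M K) borel g) B"
    using B g
    by (simp add: emeasure_out_law map_kernel_kernels K emeasure_map_kernel emeasure_distr
        measurable_cong_sets[OF sets_out_law refl] sets_eq_imp_space_eq[OF sets_out_law])
qed simp

lemma distortion_eq:
  "K \<in> kernels \<Longrightarrow> distortion M K = (\<integral>\<^sup>+x. \<integral>\<^sup>+y. ennreal ((x - y)\<^sup>2) \<partial>K x \<partial>M)"
  unfolding distortion_def by (subst nn_integral_joint) auto

lemma distortion_map_kernel:
  assumes K: "K \<in> kernels" and g: "g \<in> borel_measurable borel"
  shows "distortion M (map_kernel K g) = (\<integral>\<^sup>+z. ennreal ((fst z - g (snd z))\<^sup>2) \<partial>joint M K)"
  using g by (simp add: distortion_eq map_kernel_kernels[OF K g] nn_integral_map_kernel[OF K g]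
      nn_integral_joint[OF K])

lemma distortion_return: "distortion M (return borel) = 0"
  by (simp add: distortion_eq[OF return_kernel] nn_integral_return)

lemma MI_eq_KL_div: "K \<in> kernels \<Longrightarrow> MI M K = KL_div (joint M K) (M \<Otimes>\<^sub>M out_law M K)"
  unfolding MI_def mutual_info_joint_def by (simp add: distr_joint_fst out_law_def)

lemma sets_pair_out_law: "sets (M \<Otimes>\<^sub>M out_law M K) = sets (borel \<Otimes>\<^sub>M borel)"
  by (intro sets_pair_measure_cong) simp_all

lemma prob_space_pair_out_law: "K \<in> kernels \<Longrightarrow> prob_space (M \<Otimes>\<^sub>M out_law M K)"
  by (simp add: prob_space_axioms prob_space_out_law prob_space_pair)

lemma MI_nonneg: "K \<in> kernels \<Longrightarrow> 0 \<le> MI M K"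
  unfolding MI_eq_KL_div
  by (intro KL_div_nonneg prob_space_joint prob_space_pair_out_law)
    (simp_all add: sets_joint sets_pair_out_law)

lemma joint_coupling: "K \<in> kernels \<Longrightarrow> joint M K \<in> couplings M (out_law M K)"
  unfolding couplings_def by (simp add: prob_space_joint sets_joint distr_joint_fst out_law_def)

lemma W2sq_out_law_le_distortion: "K \<in> kernels \<Longrightarrow> W2sq M (out_law M K) \<le> distortion M K"
  unfolding W2sq_def distortion_def by (rule INF_lower[OF joint_coupling])

end

section \<open>Mutual information of kernels with finite output\<close>

lemma nn_integral_finite_support:
  fixes N :: "real measure"
  assumes S: "sets N = sets borel" and T: "finite T" and N: "emeasure N (UNIV - T) = 0"
  shows "(\<integral>\<^sup>+y. h y \<partial>N) = (\<Sum>t\<in>T. h t * emeasure N {t})"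
proof -
  have sp: "space N = UNIV" using sets_eq_imp_space_eq[OF S] by simp
  have "T \<in> sets N" using T S by (simp add: finite_imp_closed)
  then have "AE y in N. y \<in> T"
    using N by (intro AE_I[where N="UNIV - T"]) (auto simp: sp S)
  then have "(\<integral>\<^sup>+y. h y \<partial>N) = (\<integral>\<^sup>+y. (\<Sum>t\<in>T. h t * indicator {t} y) \<partial>N)"
    by (rule nn_integral_cong_AE[OF AE_mp]) (auto simp: indicator_def T)
  also have "\<dots> = (\<Sum>t\<in>T. h t * emeasure N {t})"
    by (subst nn_integral_sum) (auto intro!: sum.cong simp: S measurable_cong_sets[OF S refl])
  finally show ?thesis .
qed

lemma sum_indicator_singleton_mult:
  "finite T \<Longrightarrow> t \<in> T \<Longrightarrow> (\<Sum>s\<in>T. indicator {s} t * a s) = (a t :: real)"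
  by (subst sum.cong[OF refl, of _ _ "\<lambda>s. if t = s then a s else 0"])
     (auto simp: indicator_def sum.delta)

lemma nn_integral_density_on_atoms:
  fixes \<nu> N :: "real measure"
  assumes "finite_measure \<nu>" "finite_measure N" and sets: "sets \<nu> = sets borel" "sets N = sets borel"
    and T: "finite T" "emeasure \<nu> (UNIV - T) = 0" "emeasure N (UNIV - T) = 0"
    and null: "\<And>t. t \<in> T \<Longrightarrow> measure \<nu> {t} = 0 \<Longrightarrow> measure N {t} = 0"
    and A: "A \<in> sets borel"
  shows "(\<integral>\<^sup>+y. ennreal (\<Sum>t\<in>T. indicator {t} y * (measure N {t} / measure \<nu> {t})) * indicator A y \<partial>\<nu>)
    = emeasure N A"
proof -
  interpret \<nu>: finite_measure \<nu> by fact
  interpret N: finite_measure N by fact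
  have "(\<integral>\<^sup>+y. ennreal (\<Sum>t\<in>T. indicator {t} y * (measure N {t} / measure \<nu> {t})) * indicator A y \<partial>\<nu>)
      = (\<Sum>t\<in>T. ennreal (\<Sum>s\<in>T. indicator {s} t * (measure N {s} / measure \<nu> {s})) * indicator A t
          * emeasure \<nu> {t})"
    by (rule nn_integral_finite_support[OF sets(1) T(1,2)])
  also have "\<dots> = (\<Sum>t\<in>T. indicator A t * emeasure N {t})"
  proof (rule sum.cong[OF refl])
    fix t assume t: "t \<in> T"
    have "ennreal (measure N {t} / measure \<nu> {t}) * ennreal (measure \<nu> {t}) = ennreal (measure N {t})"
      using null[OF t] by (cases "measure \<nu> {t} = 0") (simp_all add: ennreal_mult''[symmetric])
    then show "ennreal (\<Sum>s\<in>T. indicator {s} t * (measure N {s} / measure \<nu> {s})) * indicator A t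
        * emeasure \<nu> {t} = indicator A t * emeasure N {t}"
      by (simp only: sum_indicator_singleton_mult[OF T(1) t])
        (simp add: \<nu>.emeasure_eq_measure N.emeasure_eq_measure indicator_def)
  qed
  also have "\<dots> = (\<integral>\<^sup>+y. indicator A y \<partial>N)"
    by (rule nn_integral_finite_support[symmetric, OF sets(2) T(1,3)])
  also have "\<dots> = emeasure N A"
    using A sets(2) by simp
  finally show ?thesis .
qed

context real_distribution
begin

lemma AE_kernel_null_atoms:
  assumes K: "K \<in> kernels" and T: "finite T"
  shows "AE x in M. \<forall>t\<in>T. measure (out_law M K) {t} = 0 \<longrightarrow> measure (K x) {t} = 0"
proof (rule AE_finite_allI[OF T])
  fix t
  interpret \<nu>: real_distribution "out_law M K" by (rule real_distribution_out_law[OF K])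
  show "AE x in M. measure (out_law M K) {t} = 0 \<longrightarrow> measure (K x) {t} = 0"
  proof (cases "measure (out_law M K) {t} = 0")
    case True
    then have "emeasure (out_law M K) {t} = 0" by (simp add: \<nu>.emeasure_eq_measure)
    then have "AE x in M. emeasure (K x) {t} = 0"
      using K by (simp add: emeasure_out_law nn_integral_0_iff_AE)
    then show ?thesis by eventually_elim (simp add: emeasure_kernel_eq_measure[OF K])
  qed simp
qed

lemma emeasure_out_law_compl_null:
  assumes K: "K \<in> kernels" and T: "finite T" and KT: "\<And>x. emeasure (K x) T = 1"
  shows "emeasure (out_law M K) (UNIV - T) = 0"
proof -
  have TB: "T \<in> sets borel" using T by (simp add: borel_closed finite_imp_closed)
  then have "UNIV - T \<in> sets borel" by auto
  then show ?thesis by (simp add: emeasure_out_law[OF K] emeasure_kernel_compl[OF K TB KT])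
qed

lemma joint_eq_density_finite_output:
  assumes K: "K \<in> kernels" and T: "finite T" and KT: "\<And>x. emeasure (K x) T = 1"
  shows "joint M K = density (M \<Otimes>\<^sub>M out_law M K) (\<lambda>z. ennreal (\<Sum>t\<in>T.
           indicator {t} (snd z) * (measure (K (fst z)) {t} / measure (out_law M K) {t})))"
    (is "_ = density ?Q (\<lambda>z. ennreal (?f z))")
proof (rule measure_eqI)
  define \<nu> where "\<nu> = out_law M K"
  interpret \<nu>: real_distribution \<nu> unfolding \<nu>_def by (rule real_distribution_out_law[OF K])
  have [measurable]: "?f \<in> borel_measurable (borel \<Otimes>\<^sub>M borel)"
    using K by measurable
  have mQ: "measurable (M \<Otimes>\<^sub>M \<nu>) N = measurable (borel \<Otimes>\<^sub>M borel) N" for N :: "ennreal measure"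
    unfolding \<nu>_def by (rule measurable_cong_sets[OF sets_pair_out_law refl])
  have fQ: "(\<lambda>z. ennreal (?f z)) \<in> borel_measurable ?Q"
    unfolding mQ[unfolded \<nu>_def] by measurable
  have TB: "T \<in> sets borel" using T by (simp add: finite_imp_closed)
  have AE0: "AE x in M. \<forall>t\<in>T. measure \<nu> {t} = 0 \<longrightarrow> measure (K x) {t} = 0"
    unfolding \<nu>_def by (rule AE_kernel_null_atoms[OF K T])
  fix C assume "C \<in> sets (joint M K)"
  then have C: "C \<in> sets (borel \<Otimes>\<^sub>M borel)" by (simp add: sets_joint[OF K])
  have "emeasure (density ?Q (\<lambda>z. ennreal (?f z))) C = (\<integral>\<^sup>+z. ennreal (?f z) * indicator C z \<partial>?Q)"
    using C by (subst emeasure_density[OF fQ]) (auto simp: sets_pair_out_law)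
  also have "\<dots> = (\<integral>\<^sup>+x. \<integral>\<^sup>+y. ennreal (?f (x, y)) * indicator C (x, y) \<partial>\<nu> \<partial>M)"
  proof -
    have "(\<lambda>z. ennreal (?f z) * indicator C z) \<in> borel_measurable (M \<Otimes>\<^sub>M \<nu>)"
      unfolding mQ using C by measurable
    from \<nu>.nn_integral_fst[OF this] show ?thesis by (simp add: \<nu>_def)
  qed
  also have "\<dots> = (\<integral>\<^sup>+x. emeasure (K x) (Pair x -` C) \<partial>M)"
  proof (rule nn_integral_cong_AE)
    show "AE x in M. (\<integral>\<^sup>+y. ennreal (?f (x, y)) * indicator C (x, y) \<partial>\<nu>) = emeasure (K x) (Pair x -` C)"
      using AE0
    proof eventually_elim
      case (elim x)
      have "(\<integral>\<^sup>+y. ennreal (?f (x, y)) * indicator C (x, y) \<partial>\<nu>)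
          = (\<integral>\<^sup>+y. ennreal (?f (x, y)) * indicator (Pair x -` C) y \<partial>\<nu>)"
        by (simp add: indicator_def)
      also have "\<dots> = emeasure (K x) (Pair x -` C)"
        unfolding \<nu>_def fst_conv snd_conv
      proof (rule nn_integral_density_on_atoms[OF _ _ _ sets_kernel[OF K] T])
        show "finite_measure (out_law M K)" "finite_measure (K x)"
          using prob_space_out_law[OF K] prob_space_kernel[OF K] by (simp_all add: prob_space_def)
        show "emeasure (out_law M K) (UNIV - T) = 0" by (rule emeasure_out_law_compl_null[OF K T KT])
        show "emeasure (K x) (UNIV - T) = 0" by (rule emeasure_kernel_compl[OF K TB KT])
        show "measure (K x) {t} = 0" if "t \<in> T" "measure (out_law M K) {t} = 0" for t
          using elim that by (simp add: \<nu>_def)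
      qed (simp_all add: sets_Pair1[OF C])
      finally show ?case .
    qed
  qed
  also have "\<dots> = emeasure (joint M K) C" by (rule emeasure_joint[OF K C, symmetric])
  finally show "emeasure (joint M K) C = emeasure (density ?Q (\<lambda>z. ennreal (?f z))) C" ..
qed (simp add: sets_joint[OF K] sets_pair_out_law)

lemma MI_finite_output:
  assumes K: "K \<in> kernels" and T: "finite T" and KT: "\<And>x. emeasure (K x) T = 1"
  shows "MI M K = enn2ereal (\<integral>\<^sup>+x. (\<Sum>t\<in>T. ennreal (measure (out_law M K) {t} *
            psi (measure (K x) {t} / measure (out_law M K) {t}))) \<partial>M)"
proof -
  define \<nu> where "\<nu> = out_law M K"
  interpret \<nu>: real_distribution \<nu> unfolding \<nu>_def by (rule real_distribution_out_law[OF K])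
  interpret Q: pair_prob_space M \<nu> ..
  define f where "f z = (\<Sum>t\<in>T. indicator {t} (snd z) * (measure (K (fst z)) {t} / measure \<nu> {t}))"
    for z
  have m: "measurable (M \<Otimes>\<^sub>M \<nu>) N = measurable (borel \<Otimes>\<^sub>M borel) N" for N :: "real measure"
    unfolding \<nu>_def by (rule measurable_cong_sets[OF sets_pair_out_law refl])
  have [measurable]: "f \<in> borel_measurable (borel \<Otimes>\<^sub>M borel)"
    unfolding f_def using K by measurable
  have fnn: "f z \<ge> 0" for z unfolding f_def by (auto intro!: sum_nonneg)
  have dens: "joint M K = density (M \<Otimes>\<^sub>M \<nu>) (\<lambda>z. ennreal (f z))"
    unfolding f_def \<nu>_def by (rule joint_eq_density_finite_output[OF K T KT])
  have "MI M K = enn2ereal (\<integral>\<^sup>+z. ennreal (psi (f z)) \<partial>(M \<Otimes>\<^sub>M \<nu>))"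
    unfolding MI_eq_KL_div[OF K] \<nu>_def[symmetric] dens
    by (rule KL_div_density) (simp_all add: Q.prob_space_axioms m fnn prob_space_joint[OF K, unfolded dens])
  also have "(\<integral>\<^sup>+z. ennreal (psi (f z)) \<partial>(M \<Otimes>\<^sub>M \<nu>)) = (\<integral>\<^sup>+x. \<integral>\<^sup>+y. ennreal (psi (f (x, y))) \<partial>\<nu> \<partial>M)"
    by (subst \<nu>.nn_integral_fst[symmetric]) auto
  also have "\<dots> = (\<integral>\<^sup>+x. (\<Sum>t\<in>T. ennreal (measure \<nu> {t} * psi (measure (K x) {t} / measure \<nu> {t}))) \<partial>M)"
  proof (rule nn_integral_cong)
    fix x
    have \<nu>N: "emeasure \<nu> (UNIV - T) = 0"
      unfolding \<nu>_def by (rule emeasure_out_law_compl_null[OF K T KT])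
    show "(\<integral>\<^sup>+y. ennreal (psi (f (x, y))) \<partial>\<nu>)
        = (\<Sum>t\<in>T. ennreal (measure \<nu> {t} * psi (measure (K x) {t} / measure \<nu> {t})))"
      unfolding nn_integral_finite_support[OF _ T \<nu>N, simplified]
      using sum_indicator_singleton_mult[OF T, of _ "\<lambda>s. measure (K x) {s} / measure \<nu> {s}"]
      by (intro sum.cong) (auto simp: f_def \<nu>.emeasure_eq_measure ennreal_mult'[symmetric] mult.commute)
  qed
  finally show ?thesis unfolding \<nu>_def .
qed

lemma MI_finite_output_less_top:
  assumes K: "K \<in> kernels" and T: "finite T" and KT: "\<And>x. emeasure (K x) T = 1"
  shows "MI M K < \<infinity>"
proof -
  define c where "c t = measure (out_law M K) {t}" for t
  have "c t * psi (measure (K x) {t} / c t) \<le> 1 + \<bar>ln (c t)\<bar>" for x t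
  proof (cases "c t = 0")
    case False
    then show ?thesis
      using prob_space.prob_le_1[OF prob_space_kernel[OF K]]
        prob_space.prob_le_1[OF prob_space_out_law[OF K]]
      by (intro mult_psi_divide_le) (auto simp: c_def less_le)
  qed simp
  then have "(\<integral>\<^sup>+x. (\<Sum>t\<in>T. ennreal (c t * psi (measure (K x) {t} / c t))) \<partial>M)
       \<le> (\<integral>\<^sup>+x. (\<Sum>t\<in>T. ennreal (1 + \<bar>ln (c t)\<bar>)) \<partial>M)"
    by (intro nn_integral_mono sum_mono ennreal_leI)
  also have "\<dots> < \<infinity>"
    by (simp add: emeasure_space_1[unfolded space_eq_univ] less_top[symmetric] ennreal_plus[symmetric] del: ennreal_plus)
  finally show ?thesis unfolding MI_finite_output[OF K T KT] c_def by (simp add: less_top[symmetric])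
qed

end

section \<open>Data processing\<close>

lemma psi_jensen_set:
  assumes "finite_measure N" and B[measurable]: "B \<in> sets N" and m: "measure N B > 0"
    and [measurable]: "F \<in> borel_measurable N" and Fnn: "\<And>y. F y \<ge> 0"
    and I: "(\<integral>\<^sup>+y. ennreal (F y) * indicator B y \<partial>N) = ennreal I" and Inn: "I \<ge> 0"
  shows "ennreal (measure N B * psi (I / measure N B)) \<le> (\<integral>\<^sup>+y. ennreal (psi (F y)) * indicator B y \<partial>N)"
proof -
  interpret finite_measure N by fact
  define m where "m = measure N B"
  define c where "c = I / m"
  have Ic: "I = c * m" and c: "c \<ge> 0" using m Inn by (simp_all add: c_def m_def)
  have ind: "(\<lambda>y. ennreal (f y) * indicator B y) = (\<lambda>y. ennreal (f y * indicator B y))" for f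
    by (simp add: indicator_def fun_eq_iff)
  show ?thesis
  proof (cases "c = 0")
    case True
    \<comment> \<open>then F vanishes almost everywhere on B, where psi \<circ> F is therefore 1\<close>
    then have "AE y in N. ennreal (F y) * indicator B y = 0"
      using I Ic by (subst nn_integral_0_iff_AE[symmetric]) auto
    then have "(\<integral>\<^sup>+y. ennreal (psi (F y)) * indicator B y \<partial>N) = (\<integral>\<^sup>+y. indicator B y \<partial>N)"
      using Fnn by (intro nn_integral_cong_AE) (auto elim!: eventually_mono simp: indicator_def psi_def)
    then show ?thesis using True B by (simp add: Ic psi_def emeasure_eq_measure m_def)
  next
    case False
    \<comment> \<open>integrate the tangent line of psi at the mean value c over B\<close>
    show ?thesis
    proof (cases "(\<integral>\<^sup>+y. ennreal (psi (F y)) * indicator B y \<partial>N) = \<infinity>")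
      case fin: False
      have "(\<integral>\<^sup>+y. ennreal (F y * indicator B y) \<partial>N) < \<infinity>"
        using I unfolding ind by simp
      then have int_F: "integrable N (\<lambda>y. F y * indicator B y)"
        using Fnn by (intro integrableI_nonneg) auto
      have "(\<integral>\<^sup>+y. ennreal (psi (F y) * indicator B y) \<partial>N) < \<infinity>"
        using fin unfolding ind by (simp add: less_top)
      then have int_psi: "integrable N (\<lambda>y. psi (F y) * indicator B y)"
        using Fnn psi_nonneg by (intro integrableI_nonneg) auto
      have IF: "(\<integral>y. F y * indicator B y \<partial>N) = I"
        using nn_integral_eq_integral[OF int_F] I Fnn Inn by (simp add: ind[symmetric])
      have int_B: "integrable N (\<lambda>y. a * indicator B y)" for a :: real
        using B by (intro integrable_real_mult_indicator) auto
      have "m * psi c = (psi c - c * ln c) * m + ln c * I"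
        by (simp add: Ic algebra_simps)
      also have "\<dots> = (\<integral>y. (psi c - c * ln c) * indicator B y + ln c * (F y * indicator B y) \<partial>N)"
        using int_F int_B B by (subst Bochner_Integration.integral_add) (auto simp: IF m_def)
      also have "\<dots> \<le> (\<integral>y. psi (F y) * indicator B y \<partial>N)"
      proof (rule integral_mono[OF _ int_psi])
        show "integrable N (\<lambda>y. (psi c - c * ln c) * indicator B y + ln c * (F y * indicator B y))"
          using int_F int_B[of "psi c - c * ln c"] by (intro Bochner_Integration.integrable_add) auto
        show "(psi c - c * ln c) * indicator B y + ln c * (F y * indicator B y) \<le> psi (F y) * indicator B y" for y
          using psi_ge_tangent[OF Fnn, of c y] False c by (auto simp: indicator_def algebra_simps)
      qed
      finally show ?thesis
        using nn_integral_eq_integral[OF int_psi] Fnn psi_nonneg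
        by (simp add: ind m_def c_def)
    qed simp
  qed
qed

lemma psi_jensen_partition:
  assumes "finite_measure N" and g: "finite (range g)" "\<And>t. g -` {t} \<in> sets N"
    and [measurable]: "F \<in> borel_measurable N" and Fnn: "\<And>y. F y \<ge> 0"
    and I: "\<And>t. t \<in> range g \<Longrightarrow> (\<integral>\<^sup>+y. ennreal (F y) * indicator (g -` {t}) y \<partial>N) = ennreal (a t)"
    and a: "\<And>t. a t \<ge> 0"
  shows "(\<Sum>t\<in>range g. ennreal (measure N (g -` {t}) * psi (a t / measure N (g -` {t}))))
           \<le> (\<integral>\<^sup>+y. ennreal (psi (F y)) \<partial>N)"
proof -
  have "(\<Sum>t\<in>range g. ennreal (measure N (g -` {t}) * psi (a t / measure N (g -` {t}))))
      \<le> (\<Sum>t\<in>range g. \<integral>\<^sup>+y. ennreal (psi (F y)) * indicator (g -` {t}) y \<partial>N)"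
  proof (rule sum_mono)
    fix t assume t: "t \<in> range g"
    show "ennreal (measure N (g -` {t}) * psi (a t / measure N (g -` {t})))
        \<le> (\<integral>\<^sup>+y. ennreal (psi (F y)) * indicator (g -` {t}) y \<partial>N)"
    proof (cases "measure N (g -` {t}) = 0")
      case False
      then show ?thesis
        using g(2) I[OF t] a
        by (intro psi_jensen_set[OF assms(1)]) (auto simp: Fnn less_le)
    qed simp
  qed
  also have "\<dots> = (\<integral>\<^sup>+y. (\<Sum>t\<in>range g. ennreal (psi (F y)) * indicator (g -` {t}) y) \<partial>N)"
    using g(2)[measurable] by (intro nn_integral_sum[symmetric]) measurable
  also have "\<dots> = (\<integral>\<^sup>+y. ennreal (psi (F y)) \<partial>N)"
  proof (rule nn_integral_cong)
    fix y
    have "(\<Sum>t\<in>range g. ennreal (psi (F y)) * indicator (g -` {t}) y)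
        = (\<Sum>t\<in>range g. if t = g y then ennreal (psi (F y)) else 0)"
      by (intro sum.cong) (auto simp: indicator_def)
    then show "(\<Sum>t\<in>range g. ennreal (psi (F y)) * indicator (g -` {t}) y) = ennreal (psi (F y))"
      using g(1) by simp
  qed
  finally show ?thesis .
qed

context real_distribution
begin

lemma kernel_disintegration:
  assumes K: "K \<in> kernels" and [measurable]: "F \<in> borel_measurable (borel \<Otimes>\<^sub>M borel)"
    and dens: "joint M K = density (M \<Otimes>\<^sub>M out_law M K) (\<lambda>z. ennreal (F z))"
    and B[measurable]: "B \<in> sets borel"
  shows "AE x in M. emeasure (K x) B = (\<integral>\<^sup>+y. ennreal (F (x, y)) * indicator B y \<partial>out_law M K)"
proof -
  define \<nu> where "\<nu> = out_law M K"
  interpret \<nu>: real_distribution \<nu> unfolding \<nu>_def by (rule real_distribution_out_law[OF K])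
  have mQ: "measurable (M \<Otimes>\<^sub>M \<nu>) N = measurable (borel \<Otimes>\<^sub>M borel) N" for N :: "ennreal measure"
    unfolding \<nu>_def by (rule measurable_cong_sets[OF sets_pair_out_law refl])
  have Fubini: "(\<integral>\<^sup>+z. ennreal (F z) * indicator C z \<partial>(M \<Otimes>\<^sub>M \<nu>))
      = (\<integral>\<^sup>+x. \<integral>\<^sup>+y. ennreal (F (x, y)) * indicator C (x, y) \<partial>\<nu> \<partial>M)"
    if [measurable]: "C \<in> sets (borel \<Otimes>\<^sub>M borel)" for C
  proof -
    have "(\<lambda>z. ennreal (F z) * indicator C z) \<in> borel_measurable (M \<Otimes>\<^sub>M \<nu>)"
      unfolding mQ by measurable
    from \<nu>.nn_integral_fst[OF this] show ?thesis ..
  qed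
  have m2: "(\<lambda>x. \<integral>\<^sup>+y. ennreal (F (x, y)) * indicator B y \<partial>\<nu>) \<in> borel_measurable M"
  proof -
    have "(\<lambda>z. ennreal (F z) * indicator B (snd z)) \<in> borel_measurable (M \<Otimes>\<^sub>M \<nu>)"
      unfolding mQ by measurable
    from \<nu>.borel_measurable_nn_integral_fst[OF this] show ?thesis by simp
  qed
  \<comment> \<open>both densities assign joint M K (A \<times> B) to A\<close>
  have "density M (\<lambda>x. emeasure (K x) B) = density M (\<lambda>x. \<integral>\<^sup>+y. ennreal (F (x, y)) * indicator B y \<partial>\<nu>)"
  proof (rule measure_eqI)
    fix A assume "A \<in> sets (density M (\<lambda>x. emeasure (K x) B))"
    then have A[measurable]: "A \<in> sets borel" by simp
    have "emeasure (density M (\<lambda>x. emeasure (K x) B)) A = (\<integral>\<^sup>+x. emeasure (K x) B * indicator A x \<partial>M)"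
      using K by (simp add: emeasure_density)
    also have "\<dots> = (\<integral>\<^sup>+x. emeasure (K x) (Pair x -` (A \<times> B)) \<partial>M)"
      by (intro nn_integral_cong) (auto simp: indicator_def)
    also have "\<dots> = emeasure (joint M K) (A \<times> B)"
      using K by (simp add: emeasure_joint)
    also have "\<dots> = (\<integral>\<^sup>+z. ennreal (F z) * indicator (A \<times> B) z \<partial>(M \<Otimes>\<^sub>M \<nu>))"
      unfolding dens \<nu>_def by (subst emeasure_density) (auto simp: sets_pair_out_law mQ[unfolded \<nu>_def])
    also have "\<dots> = (\<integral>\<^sup>+x. (\<integral>\<^sup>+y. ennreal (F (x, y)) * indicator B y \<partial>\<nu>) * indicator A x \<partial>M)"
      by (simp add: Fubini) (auto intro!: nn_integral_cong simp: indicator_def)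
    also have "\<dots> = emeasure (density M (\<lambda>x. \<integral>\<^sup>+y. ennreal (F (x, y)) * indicator B y \<partial>\<nu>)) A"
      using m2 by (simp add: emeasure_density)
    finally show "emeasure (density M (\<lambda>x. emeasure (K x) B)) A
        = emeasure (density M (\<lambda>x. \<integral>\<^sup>+y. ennreal (F (x, y)) * indicator B y \<partial>\<nu>)) A" .
  qed simp
  then show ?thesis unfolding \<nu>_def[symmetric] using K m2 by (intro density_unique) simp_all
qed

lemma MI_eq_nn_integral_psi_density:
  assumes K: "K \<in> kernels" and ac: "absolutely_continuous (M \<Otimes>\<^sub>M out_law M K) (joint M K)"
  obtains F where "F \<in> borel_measurable (borel \<Otimes>\<^sub>M borel)" "\<And>z. F z \<ge> 0"
    "joint M K = density (M \<Otimes>\<^sub>M out_law M K) (\<lambda>z. ennreal (F z))"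
    "MI M K = enn2ereal (\<integral>\<^sup>+x. \<integral>\<^sup>+y. ennreal (psi (F (x, y))) \<partial>out_law M K \<partial>M)"
proof -
  define \<nu> where "\<nu> = out_law M K"
  define Q where "Q = M \<Otimes>\<^sub>M \<nu>"
  define J where "J = joint M K"
  define F where "F z = enn2real (RN_deriv Q J z)" for z
  interpret \<nu>: real_distribution \<nu> unfolding \<nu>_def by (rule real_distribution_out_law[OF K])
  interpret Q: pair_prob_space M \<nu> ..
  have sQ: "sets Q = sets (borel \<Otimes>\<^sub>M borel)" unfolding Q_def \<nu>_def by (rule sets_pair_out_law)
  have sJ: "sets J = sets Q" unfolding J_def by (simp add: sets_joint[OF K] sQ)
  have acQ: "absolutely_continuous Q J" using ac by (simp add: Q_def J_def \<nu>_def)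
  have F: "F \<in> borel_measurable (borel \<Otimes>\<^sub>M borel)"
    using borel_measurable_RN_deriv[of Q J] unfolding F_def measurable_cong_sets[OF sQ refl]
    by measurable
  have "AE z in Q. RN_deriv Q J z \<noteq> \<infinity>"
    using acQ sJ prob_space_joint[OF K] unfolding Q_def J_def
    by (intro Q.RN_deriv_finite) (auto simp: prob_space_imp_sigma_finite)
  then have "density Q (RN_deriv Q J) = density Q (\<lambda>z. ennreal (F z))"
    by (intro density_cong) (auto simp: F_def less_top[symmetric] elim!: eventually_mono)
  moreover have "J = density Q (RN_deriv Q J)"
    using Q.density_RN_deriv[of J] acQ sJ unfolding Q_def by simp
  ultimately have dens: "J = density Q (\<lambda>z. ennreal (F z))" by simp
  have "MI M K = KL_div (density Q (\<lambda>z. ennreal (F z))) Q"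
    unfolding MI_eq_KL_div[OF K] dens[symmetric] by (simp add: J_def Q_def \<nu>_def)
  also have "\<dots> = enn2ereal (\<integral>\<^sup>+z. ennreal (psi (F z)) \<partial>Q)"
  proof (rule KL_div_density)
    show "prob_space (density Q (\<lambda>z. ennreal (F z)))"
      using prob_space_joint[OF K] by (simp add: dens[symmetric] J_def)
  qed (use F in \<open>simp_all add: Q_def Q.prob_space_axioms F_def measurable_cong_sets[OF sQ[unfolded Q_def] refl]\<close>)
  also have "(\<integral>\<^sup>+z. ennreal (psi (F z)) \<partial>Q) = (\<integral>\<^sup>+x. \<integral>\<^sup>+y. ennreal (psi (F (x, y))) \<partial>\<nu> \<partial>M)"
    unfolding Q_def using F
    by (intro \<nu>.nn_integral_fst[symmetric]) (simp add: measurable_cong_sets[OF sQ[unfolded Q_def] refl])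
  finally show thesis
    using that[OF F _ dens[unfolded J_def Q_def \<nu>_def]] by (simp add: F_def \<nu>_def)
qed

lemma MI_map_kernel_le:
  assumes K: "K \<in> kernels" and g[measurable]: "g \<in> borel_measurable borel" and T: "finite (range g)"
  shows "MI M (map_kernel K g) \<le> MI M K"
proof (cases "absolutely_continuous (M \<Otimes>\<^sub>M out_law M K) (joint M K)")
  case False
  then show ?thesis by (simp add: MI_eq_KL_div[OF K] KL_div_def)
next
  case True
  define \<nu> where "\<nu> = out_law M K"
  interpret \<nu>: real_distribution \<nu> unfolding \<nu>_def by (rule real_distribution_out_law[OF K])
  obtain F where F[measurable]: "F \<in> borel_measurable (borel \<Otimes>\<^sub>M borel)" and Fnn: "\<And>z. F z \<ge> 0"
    and dens: "joint M K = density (M \<Otimes>\<^sub>M \<nu>) (\<lambda>z. ennreal (F z))"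
    and MI_K: "MI M K = enn2ereal (\<integral>\<^sup>+x. \<integral>\<^sup>+y. ennreal (psi (F (x, y))) \<partial>\<nu> \<partial>M)"
    using MI_eq_nn_integral_psi_density[OF K True, folded \<nu>_def] by blast
  have gB: "g -` {t} \<in> sets borel" for t
    using g by (auto simp: measurable_def)
  have disint: "AE x in M. \<forall>t\<in>range g.
      emeasure (K x) (g -` {t}) = (\<integral>\<^sup>+y. ennreal (F (x, y)) * indicator (g -` {t}) y \<partial>\<nu>)"
    using T dens unfolding \<nu>_def
    by (intro AE_finite_allI kernel_disintegration[OF K F]) (simp_all add: gB)
  have "MI M (map_kernel K g) = enn2ereal (\<integral>\<^sup>+x. (\<Sum>t\<in>range g. ennreal (measure \<nu> (g -` {t}) *
      psi (measure (K x) (g -` {t}) / measure \<nu> (g -` {t})))) \<partial>M)"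
    using MI_finite_output[OF map_kernel_kernels[OF K g] T emeasure_map_kernel_range[OF K g T]]
    by (simp add: out_law_map_kernel[OF K g] measure_distr measure_map_kernel[OF K g] \<nu>_def
        measurable_cong_sets[OF sets_out_law refl] sets_eq_imp_space_eq[OF sets_out_law])
  also have "\<dots> \<le> MI M K"
    unfolding MI_K less_eq_ennreal.rep_eq[symmetric] using disint
  proof (intro nn_integral_mono_AE, eventually_elim)
    case (elim x)
    show ?case
    proof (rule psi_jensen_partition[OF \<nu>.finite_measure_axioms T])
      show "(\<integral>\<^sup>+y. ennreal (F (x, y)) * indicator (g -` {t}) y \<partial>\<nu>) = ennreal (measure (K x) (g -` {t}))"
        if "t \<in> range g" for t
        using elim that emeasure_kernel_eq_measure[OF K] by metis
    qed (simp_all add: gB Fnn)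
  qed
  finally show ?thesis .
qed

end

section \<open>Quantization of the output\<close>

definition quantizer :: "real \<Rightarrow> real \<Rightarrow> real \<Rightarrow> real" where
  "quantizer R \<delta> y = (if \<bar>y\<bar> \<le> R then \<delta> * of_int \<lfloor>y / \<delta>\<rfloor> else 0)"

lemma quantizer_measurable [measurable]: "quantizer R \<delta> \<in> borel_measurable borel"
  unfolding quantizer_def by measurable

lemma finite_range_quantizer:
  assumes \<delta>: "\<delta> > 0"
  shows "finite (range (quantizer R \<delta>))"
proof -
  define N where "N = \<lceil>\<bar>R\<bar> / \<delta>\<rceil>"
  have bound: "\<bar>\<lfloor>y / \<delta>\<rfloor>\<bar> \<le> N + 1" if "\<bar>y\<bar> \<le> R" for y
  proof -
    have "\<bar>y / \<delta>\<bar> \<le> \<bar>R\<bar> / \<delta>"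
      using that \<delta> by (simp add: abs_div divide_right_mono)
    then have "\<bar>y / \<delta>\<bar> \<le> N" unfolding N_def by linarith
    then show ?thesis by linarith
  qed
  have "quantizer R \<delta> y \<in> insert 0 ((\<lambda>k. \<delta> * of_int k) ` {-N-1..N+1})" for y
    using bound[of y] by (auto simp: quantizer_def abs_le_iff intro!: rev_image_eqI[of "\<lfloor>y / \<delta>\<rfloor>"])
  then have "range (quantizer R \<delta>) \<subseteq> insert 0 ((\<lambda>k. \<delta> * of_int k) ` {-N-1..N+1})"
    by auto
  then show ?thesis by (rule finite_subset) auto
qed

lemma quantizer_error_le:
  assumes \<delta>: "\<delta> > 0"
  shows "(y - quantizer R \<delta> y)\<^sup>2 \<le> \<delta>\<^sup>2 + y\<^sup>2 * indicator {y. R < \<bar>y\<bar>} y"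
proof (cases "\<bar>y\<bar> \<le> R")
  case True
  have "0 \<le> y / \<delta> - of_int \<lfloor>y / \<delta>\<rfloor>" "y / \<delta> - of_int \<lfloor>y / \<delta>\<rfloor> < 1"
    by linarith+
  then have "0 \<le> y - \<delta> * of_int \<lfloor>y / \<delta>\<rfloor>" "y - \<delta> * of_int \<lfloor>y / \<delta>\<rfloor> \<le> \<delta>"
    using \<delta> by (simp_all add: field_simps)
  then show ?thesis using True by (simp add: quantizer_def power_mono)
qed (simp add: quantizer_def)

lemma nn_integral_tail_less:
  fixes \<nu> :: "real measure"
  assumes S: "sets \<nu> = sets borel" and fin: "(\<integral>\<^sup>+y. ennreal (y\<^sup>2) \<partial>\<nu>) < \<infinity>" and \<tau>: "\<tau> > 0"
  shows "\<exists>R. (\<integral>\<^sup>+y. ennreal (y\<^sup>2) * indicator {y. R < \<bar>y\<bar>} y \<partial>\<nu>) < ennreal \<tau>"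
proof -
  define f where "f n y = ennreal (y\<^sup>2) * indicator {y. real n < \<bar>y\<bar>} y" for n :: nat and y :: real
  have "decseq f"
    by (intro decseq_SucI le_funI) (auto simp: f_def indicator_def)
  moreover have "f n \<in> borel_measurable \<nu>" for n
    unfolding f_def measurable_cong_sets[OF S refl] by measurable
  moreover have "(\<integral>\<^sup>+y. f n y \<partial>\<nu>) < \<infinity>" for n
    by (rule le_less_trans[OF _ fin]) (auto intro!: nn_integral_mono simp: f_def indicator_def)
  moreover have "(INF n. f n y) = 0" for y
  proof -
    obtain n :: nat where "\<bar>y\<bar> \<le> real n" using real_arch_simple by blast
    then have "f n y = 0" by (simp add: f_def)
    then show ?thesis by (metis INF_lower2 UNIV_I bot.extremum_unique bot_ennreal)
  qed
  ultimately have "(INF n. integral\<^sup>N \<nu> (f n)) = 0"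
    using nn_integral_monotone_convergence_INF_decseq[of f \<nu>] by simp
  then obtain n where "integral\<^sup>N \<nu> (f n) < ennreal \<tau>"
    using \<tau> by (metis INF_less_iff ennreal_0 ennreal_less_iff order_refl)
  then show ?thesis unfolding f_def by blast
qed

lemma exists_quantizer_L2_close:
  fixes \<nu> :: "real measure"
  assumes "prob_space \<nu>" and S: "sets \<nu> = sets borel"
    and fin: "(\<integral>\<^sup>+y. ennreal (y\<^sup>2) \<partial>\<nu>) < \<infinity>" and \<tau>: "\<tau> > 0"
  shows "\<exists>g. g \<in> borel_measurable borel \<and> finite (range g) \<and> (\<integral>\<^sup>+y. ennreal ((y - g y)\<^sup>2) \<partial>\<nu>) < ennreal \<tau>"
proof -
  interpret prob_space \<nu> by fact
  obtain R where tail: "(\<integral>\<^sup>+y. ennreal (y\<^sup>2) * indicator {y. R < \<bar>y\<bar>} y \<partial>\<nu>) < ennreal (\<tau> / 2)"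
    using nn_integral_tail_less[OF S fin, of "\<tau> / 2"] \<tau> by auto
  define \<delta> where "\<delta> = sqrt (\<tau> / 2)"
  have \<delta>: "\<delta> > 0" "\<delta>\<^sup>2 = \<tau> / 2" unfolding \<delta>_def using \<tau> by simp_all
  have "(\<integral>\<^sup>+y. ennreal ((y - quantizer R \<delta> y)\<^sup>2) \<partial>\<nu>)
      \<le> (\<integral>\<^sup>+y. ennreal (\<delta>\<^sup>2) + ennreal (y\<^sup>2) * indicator {y. R < \<bar>y\<bar>} y \<partial>\<nu>)"
  proof (intro nn_integral_mono)
    fix y
    have "ennreal ((y - quantizer R \<delta> y)\<^sup>2) \<le> ennreal (\<delta>\<^sup>2 + y\<^sup>2 * indicator {y. R < \<bar>y\<bar>} y)"
      by (intro ennreal_leI quantizer_error_le[OF \<delta>(1)])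
    then show "ennreal ((y - quantizer R \<delta> y)\<^sup>2) \<le> ennreal (\<delta>\<^sup>2) + ennreal (y\<^sup>2) * indicator {y. R < \<bar>y\<bar>} y"
      by (cases "R < \<bar>y\<bar>") simp_all
  qed
  also have "\<dots> = ennreal (\<delta>\<^sup>2) + (\<integral>\<^sup>+y. ennreal (y\<^sup>2) * indicator {y. R < \<bar>y\<bar>} y \<partial>\<nu>)"
    by (subst nn_integral_add) (auto simp: measurable_cong_sets[OF S refl] emeasure_space_1)
  also have "\<dots> < ennreal (\<tau> / 2) + ennreal (\<tau> / 2)"
    unfolding \<delta>(2) using tail by (simp add: ennreal_add_left_cancel_less)
  also have "\<dots> = ennreal \<tau>" using \<tau> by (simp add: ennreal_plus[symmetric] del: ennreal_plus)
  finally show ?thesis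
    using finite_range_quantizer[OF \<delta>(1)] quantizer_measurable by blast
qed

lemma square_add_le:
  fixes a b \<theta> :: real
  assumes "\<theta> > 0"
  shows "(a + b)\<^sup>2 \<le> (1 + \<theta>) * a\<^sup>2 + (1 + 1 / \<theta>) * b\<^sup>2"
proof -
  have "0 \<le> (\<theta> * a - b)\<^sup>2 / \<theta>" using assms by simp
  then show ?thesis using assms by (simp add: power2_eq_square field_simps)
qed

lemma nn_integral_cost_map_snd_le:
  assumes sets: "sets \<pi> = sets (borel \<Otimes>\<^sub>M borel)" and snd: "distr \<pi> borel snd = \<nu>"
    and [measurable]: "g \<in> borel_measurable borel" and \<theta>: "\<theta> > 0"
  shows "(\<integral>\<^sup>+z. ennreal ((fst z - g (snd z))\<^sup>2) \<partial>\<pi>)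
    \<le> ennreal (1 + \<theta>) * (\<integral>\<^sup>+z. ennreal ((fst z - snd z)\<^sup>2) \<partial>\<pi>)
       + ennreal (1 + 1 / \<theta>) * (\<integral>\<^sup>+y. ennreal ((y - g y)\<^sup>2) \<partial>\<nu>)"
proof -
  have m: "measurable \<pi> N = measurable (borel \<Otimes>\<^sub>M borel) N" for N :: "ennreal measure"
    by (rule measurable_cong_sets[OF sets refl])
  have "(\<integral>\<^sup>+z. ennreal ((fst z - g (snd z))\<^sup>2) \<partial>\<pi>)
      \<le> (\<integral>\<^sup>+z. ennreal (1 + \<theta>) * ennreal ((fst z - snd z)\<^sup>2)
                + ennreal (1 + 1 / \<theta>) * ennreal ((snd z - g (snd z))\<^sup>2) \<partial>\<pi>)"
  proof (intro nn_integral_mono)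
    fix z :: "real \<times> real"
    have "(fst z - g (snd z))\<^sup>2 \<le> (1 + \<theta>) * (fst z - snd z)\<^sup>2 + (1 + 1 / \<theta>) * (snd z - g (snd z))\<^sup>2"
      using square_add_le[OF \<theta>, of "fst z - snd z" "snd z - g (snd z)"] by simp
    then show "ennreal ((fst z - g (snd z))\<^sup>2) \<le> ennreal (1 + \<theta>) * ennreal ((fst z - snd z)\<^sup>2)
        + ennreal (1 + 1 / \<theta>) * ennreal ((snd z - g (snd z))\<^sup>2)"
      using \<theta> by (simp add: ennreal_mult[symmetric] ennreal_plus[symmetric] del: ennreal_plus)
  qed
  also have "\<dots> = ennreal (1 + \<theta>) * (\<integral>\<^sup>+z. ennreal ((fst z - snd z)\<^sup>2) \<partial>\<pi>)
       + ennreal (1 + 1 / \<theta>) * (\<integral>\<^sup>+z. ennreal ((snd z - g (snd z))\<^sup>2) \<partial>\<pi>)"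
    by (subst nn_integral_add) (auto simp: m nn_integral_cmult)
  also have "(\<integral>\<^sup>+z. ennreal ((snd z - g (snd z))\<^sup>2) \<partial>\<pi>) = (\<integral>\<^sup>+y. ennreal ((y - g y)\<^sup>2) \<partial>\<nu>)"
    unfolding snd[symmetric] by (subst nn_integral_distr) (auto simp: measurable_cong_sets[OF sets refl])
  finally show ?thesis .
qed

text \<open>One quantizer serves all couplings of cost at most A at once: by
  nn_integral_cost_map_snd_le the extra cost is at most \<theta> A + (1 + 1/\<theta>) E[(Y - g Y)^2].\<close>

lemma exists_quantizer:
  fixes \<nu> :: "real measure"
  assumes "prob_space \<nu>" "sets \<nu> = sets borel" "(\<integral>\<^sup>+y. ennreal (y\<^sup>2) \<partial>\<nu>) < \<infinity>"
    and A: "A \<ge> 0" and \<eta>: "\<eta> > 0"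
  obtains g where "g \<in> borel_measurable borel" "finite (range g)"
    "\<And>\<pi> c. sets \<pi> = sets (borel \<Otimes>\<^sub>M borel) \<Longrightarrow> distr \<pi> borel snd = \<nu> \<Longrightarrow>
       (\<integral>\<^sup>+z. ennreal ((fst z - snd z)\<^sup>2) \<partial>\<pi>) \<le> ennreal c \<Longrightarrow> 0 \<le> c \<Longrightarrow> c \<le> A \<Longrightarrow>
       (\<integral>\<^sup>+z. ennreal ((fst z - g (snd z))\<^sup>2) \<partial>\<pi>) \<le> ennreal (c + \<eta>)"
proof -
  define \<theta> where "\<theta> = \<eta> / (2 * (A + 1))"
  define \<tau> where "\<tau> = \<eta> / (2 * (1 + 1 / \<theta>))"
  have \<theta>: "\<theta> > 0" "\<theta> * A \<le> \<eta> / 2" unfolding \<theta>_def using A \<eta> by (simp_all add: field_simps)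
  have pos: "1 + 1 / \<theta> > 0" using \<theta> by (simp add: add_pos_pos)
  have \<tau>: "\<tau> > 0" "(1 + 1 / \<theta>) * \<tau> = \<eta> / 2"
    unfolding \<tau>_def using pos \<eta> by (simp, simp del: divide_const_simps add: field_simps)
  obtain g where g: "g \<in> borel_measurable borel" "finite (range g)"
    and E: "(\<integral>\<^sup>+y. ennreal ((y - g y)\<^sup>2) \<partial>\<nu>) < ennreal \<tau>"
    using exists_quantizer_L2_close[OF assms(1-3) \<tau>(1)] by blast
  obtain E' where E': "(\<integral>\<^sup>+y. ennreal ((y - g y)\<^sup>2) \<partial>\<nu>) = ennreal E'" "0 \<le> E'" "E' < \<tau>"
    using E by (cases "\<integral>\<^sup>+y. ennreal ((y - g y)\<^sup>2) \<partial>\<nu>") (auto simp: ennreal_less_iff)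
  show thesis
  proof (rule that[OF g])
    fix \<pi> :: "(real \<times> real) measure" and c :: real
    assume sets: "sets \<pi> = sets (borel \<Otimes>\<^sub>M borel)" and snd: "distr \<pi> borel snd = \<nu>"
      and cost: "(\<integral>\<^sup>+z. ennreal ((fst z - snd z)\<^sup>2) \<partial>\<pi>) \<le> ennreal c" and c: "0 \<le> c" "c \<le> A"
    obtain c' where c': "(\<integral>\<^sup>+z. ennreal ((fst z - snd z)\<^sup>2) \<partial>\<pi>) = ennreal c'" "0 \<le> c'" "c' \<le> c"
      using cost c by (cases "\<integral>\<^sup>+z. ennreal ((fst z - snd z)\<^sup>2) \<partial>\<pi>") (auto simp: ennreal_le_iff top_unique)
    have "\<theta> * c' \<le> \<theta> * A" using \<theta> c c' by (intro mult_left_mono) auto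
    moreover have "(1 + 1 / \<theta>) * E' \<le> (1 + 1 / \<theta>) * \<tau>" using pos E' by (intro mult_left_mono) auto
    moreover have "(1 + \<theta>) * c' = c' + \<theta> * c'" by (simp add: algebra_simps)
    ultimately have "(1 + \<theta>) * c' + (1 + 1 / \<theta>) * E' \<le> c + \<eta>"
      using \<theta>(2) \<tau>(2) c' by linarith
    then have "ennreal (1 + \<theta>) * ennreal c' + ennreal (1 + 1 / \<theta>) * ennreal E' \<le> ennreal (c + \<eta>)"
      using \<theta>(1) c'(2) E'(2)
      by (simp add: ennreal_mult[symmetric] ennreal_plus[symmetric] ennreal_leI del: ennreal_plus)
    then show "(\<integral>\<^sup>+z. ennreal ((fst z - g (snd z))\<^sup>2) \<partial>\<pi>) \<le> ennreal (c + \<eta>)"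
      using nn_integral_cost_map_snd_le[OF sets snd g(1) \<theta>(1)] unfolding c'(1) E'(1)
      by (rule order_trans[rotated])
  qed
qed

lemma coupling_map_snd:
  assumes \<pi>: "\<pi> \<in> couplings \<mu> \<nu>" and g[measurable]: "g \<in> borel_measurable borel"
  shows "distr \<pi> (borel \<Otimes>\<^sub>M borel) (\<lambda>z. (fst z, g (snd z))) \<in> couplings \<mu> (distr \<nu> borel g)"
proof -
  have "prob_space \<pi>" and sets: "sets \<pi> = sets (borel \<Otimes>\<^sub>M borel)"
    and fst: "distr \<pi> borel fst = \<mu>" and snd: "distr \<pi> borel snd = \<nu>"
    using \<pi> by (auto simp: couplings_def)
  note m = measurable_cong_sets[OF sets refl]
  show ?thesis
    unfolding couplings_def using \<open>prob_space \<pi>\<close>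
    by (auto intro!: prob_space.prob_space_distr simp: m distr_distr comp_def
        fst[symmetric] snd[symmetric])
qed

context real_distribution
begin

lemma W2sq_out_law_map_kernel_le:
  assumes K: "K \<in> kernels" and g[measurable]: "g \<in> borel_measurable borel"
    and \<pi>: "\<pi> \<in> couplings M (out_law M K)"
  shows "W2sq M (out_law M (map_kernel K g)) \<le> (\<integral>\<^sup>+z. ennreal ((fst z - g (snd z))\<^sup>2) \<partial>\<pi>)"
proof -
  have "sets \<pi> = sets (borel \<Otimes>\<^sub>M borel)" using \<pi> by (simp add: couplings_def)
  note m = measurable_cong_sets[OF this refl]
  have "W2sq M (out_law M (map_kernel K g))
      \<le> (\<integral>\<^sup>+z. ennreal ((fst z - snd z)\<^sup>2) \<partial>distr \<pi> (borel \<Otimes>\<^sub>M borel) (\<lambda>z. (fst z, g (snd z))))"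
    unfolding W2sq_def out_law_map_kernel[OF K g]
    by (intro INF_lower coupling_map_snd[OF \<pi> g])
  also have "\<dots> = (\<integral>\<^sup>+z. ennreal ((fst z - g (snd z))\<^sup>2) \<partial>\<pi>)"
    by (subst nn_integral_distr) (auto simp: m)
  finally show ?thesis .
qed

lemma out_law_second_moment:
  assumes mom: "(\<integral>\<^sup>+x. ennreal (x\<^sup>2) \<partial>M) < \<infinity>" and K: "K \<in> kernels" and D: "distortion M K < \<infinity>"
  shows "(\<integral>\<^sup>+y. ennreal (y\<^sup>2) \<partial>out_law M K) < \<infinity>"
proof -
  note m = measurable_joint_cong[OF K]
  have "(\<integral>\<^sup>+y. ennreal (y\<^sup>2) \<partial>out_law M K) = (\<integral>\<^sup>+z. ennreal ((snd z)\<^sup>2) \<partial>joint M K)"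
    unfolding out_law_def by (subst nn_integral_distr) (auto simp: m)
  also have "\<dots> \<le> (\<integral>\<^sup>+z. 2 * ennreal ((fst z)\<^sup>2) + 2 * ennreal ((fst z - snd z)\<^sup>2) \<partial>joint M K)"
  proof (intro nn_integral_mono)
    fix z :: "real \<times> real"
    have "(snd z)\<^sup>2 \<le> 2 * (fst z)\<^sup>2 + 2 * (fst z - snd z)\<^sup>2"
      using square_add_le[of 1 "fst z" "snd z - fst z"] by (simp add: power2_commute)
    then have "ennreal ((snd z)\<^sup>2) \<le> ennreal (2 * (fst z)\<^sup>2 + 2 * (fst z - snd z)\<^sup>2)"
      by (rule ennreal_leI)
    then show "ennreal ((snd z)\<^sup>2) \<le> 2 * ennreal ((fst z)\<^sup>2) + 2 * ennreal ((fst z - snd z)\<^sup>2)"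
      by (simp add: ennreal_mult)
  qed
  also have "\<dots> = 2 * (\<integral>\<^sup>+z. ennreal ((fst z)\<^sup>2) \<partial>joint M K) + 2 * distortion M K"
    unfolding distortion_def by (subst nn_integral_add) (auto simp: m nn_integral_cmult)
  also have "(\<integral>\<^sup>+z. ennreal ((fst z)\<^sup>2) \<partial>joint M K) = (\<integral>\<^sup>+x. ennreal (x\<^sup>2) \<partial>M)"
    by (subst (2) distr_joint_fst[OF K, symmetric]) (simp add: nn_integral_distr m)
  also have "2 * (\<integral>\<^sup>+x. ennreal (x\<^sup>2) \<partial>M) + 2 * distortion M K < \<infinity>"
    using mom D by (simp add: ennreal_mult_eq_top_iff less_top[symmetric])
  finally show ?thesis .
qed

lemma quantize_kernel:
  assumes mom: "(\<integral>\<^sup>+x. ennreal (x\<^sup>2) \<partial>M) < \<infinity>" and K: "K \<in> kernels"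
    and D: "distortion M K \<le> ennreal D" "D \<ge> 0"
    and P: "W2sq M (out_law M K) \<le> ennreal P" "P \<ge> 0" and \<eta>: "\<eta> > 0"
  obtains g where "g \<in> borel_measurable borel" "finite (range g)"
    "distortion M (map_kernel K g) \<le> ennreal (D + \<eta>)"
    "W2sq M (out_law M (map_kernel K g)) \<le> ennreal (P + \<eta>)"
proof -
  have "(\<integral>\<^sup>+y. ennreal (y\<^sup>2) \<partial>out_law M K) < \<infinity>"
    using D(1) by (intro out_law_second_moment[OF mom K]) (simp add: le_less_trans)
  then obtain g where g: "g \<in> borel_measurable borel" "finite (range g)"
    and cost: "\<And>\<pi> c. sets \<pi> = sets (borel \<Otimes>\<^sub>M borel) \<Longrightarrow> distr \<pi> borel snd = out_law M K \<Longrightarrow>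
        (\<integral>\<^sup>+z. ennreal ((fst z - snd z)\<^sup>2) \<partial>\<pi>) \<le> ennreal c \<Longrightarrow> 0 \<le> c \<Longrightarrow> c \<le> D + P + \<eta> \<Longrightarrow>
        (\<integral>\<^sup>+z. ennreal ((fst z - g (snd z))\<^sup>2) \<partial>\<pi>) \<le> ennreal (c + \<eta> / 2)"
    using exists_quantizer[OF prob_space_out_law[OF K] sets_out_law, of "D + P + \<eta>" "\<eta> / 2"] D P \<eta>
    by auto
  have "distortion M (map_kernel K g) \<le> ennreal (D + \<eta> / 2)"
    unfolding distortion_map_kernel[OF K g(1)]
    using D P \<eta> by (intro cost) (simp_all add: sets_joint[OF K] out_law_def distortion_def[symmetric])
  also have "\<dots> \<le> ennreal (D + \<eta>)" using \<eta> by (intro ennreal_leI) simp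
  finally have dist: "distortion M (map_kernel K g) \<le> ennreal (D + \<eta>)" .
  have "W2sq M (out_law M K) < ennreal (P + \<eta> / 2)"
    using P \<eta> by (auto intro: le_less_trans ennreal_lessI)
  then obtain \<pi> where \<pi>: "\<pi> \<in> couplings M (out_law M K)"
    and \<pi>P: "(\<integral>\<^sup>+z. ennreal ((fst z - snd z)\<^sup>2) \<partial>\<pi>) < ennreal (P + \<eta> / 2)"
    unfolding W2sq_def by (auto simp: INF_less_iff)
  have "W2sq M (out_law M (map_kernel K g)) \<le> (\<integral>\<^sup>+z. ennreal ((fst z - g (snd z))\<^sup>2) \<partial>\<pi>)"
    using \<pi> by (rule W2sq_out_law_map_kernel_le[OF K g(1)])
  also have "\<dots> \<le> ennreal (P + \<eta> / 2 + \<eta> / 2)"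
    using \<pi> \<pi>P D P \<eta> by (intro cost) (auto simp: couplings_def)
  finally have "W2sq M (out_law M (map_kernel K g)) \<le> ennreal (P + \<eta>)" by (simp add: add.commute)
  then show ?thesis by (rule that[OF g dist])
qed

end

section \<open>The rate-distortion-perception function\<close>

lemma pair_measure_coupling:
  assumes "real_distribution \<mu>" "real_distribution \<gamma>"
  shows "\<mu> \<Otimes>\<^sub>M \<gamma> \<in> couplings \<mu> \<gamma>"
proof -
  interpret \<mu>: real_distribution \<mu> by fact
  interpret \<gamma>: real_distribution \<gamma> by fact
  interpret pair_prob_space \<mu> \<gamma> ..
  have sets: "sets (\<mu> \<Otimes>\<^sub>M \<gamma>) = sets (borel \<Otimes>\<^sub>M borel)"
    by (intro sets_pair_measure_cong) simp_all
  note m = measurable_cong_sets[OF sets refl]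
  have "distr (\<mu> \<Otimes>\<^sub>M \<gamma>) borel fst = \<mu>"
    using \<gamma>.distr_pair_fst[of \<mu>] by (simp cong: distr_cong)
  moreover have "distr (\<mu> \<Otimes>\<^sub>M \<gamma>) borel snd = \<gamma>"
  proof (rule measure_eqI)
    fix B assume "B \<in> sets (distr (\<mu> \<Otimes>\<^sub>M \<gamma>) borel snd)"
    then have B: "B \<in> sets borel" by simp
    then have "emeasure (distr (\<mu> \<Otimes>\<^sub>M \<gamma>) borel snd) B = emeasure (\<mu> \<Otimes>\<^sub>M \<gamma>) (UNIV \<times> B)"
      by (subst emeasure_distr) (auto simp: m space_pair_measure intro!: arg_cong[where f="emeasure _"])
    also have "\<dots> = emeasure \<gamma> B"
      using B \<gamma>.emeasure_space_1 \<mu>.emeasure_space_1 by (subst \<gamma>.emeasure_pair_measure_Times) auto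
    finally show "emeasure (distr (\<mu> \<Otimes>\<^sub>M \<gamma>) borel snd) B = emeasure \<gamma> B" .
  qed simp
  ultimately show ?thesis
    unfolding couplings_def using sets prob_space_axioms by simp
qed

lemma finite_atoms_full_measure:
  fixes \<nu> :: "real measure"
  assumes sets: "sets \<nu> = sets borel" and T: "finite T" and \<nu>T: "emeasure \<nu> T = 1"
  shows "emeasure \<nu> {t \<in> T. emeasure \<nu> {t} > 0} = 1"
proof -
  define S where "S = {t \<in> T. emeasure \<nu> {t} > 0}"
  have fin_sets: "finite A \<Longrightarrow> A \<in> sets \<nu>" for A
    using sets by (simp add: borel_closed finite_imp_closed)
  have fin: "finite S" "finite (T - S)" using T by (simp_all add: S_def)
  have "emeasure \<nu> (T - S) = (\<Sum>t\<in>T - S. emeasure \<nu> {t})"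
    using fin by (intro emeasure_eq_sum_singleton) (auto intro: fin_sets)
  also have "\<dots> = 0" by (intro sum.neutral) (auto simp: S_def)
  finally have null: "emeasure \<nu> (T - S) = 0" .
  have "S \<union> (T - S) = T" by (auto simp: S_def)
  then have "emeasure \<nu> S + emeasure \<nu> (T - S) = emeasure \<nu> T"
    using fin_sets[OF fin(1)] fin_sets[OF fin(2)] by (subst plus_emeasure) auto
  then show ?thesis using \<nu>T null by (simp add: S_def)
qed

context real_distribution
begin

lemma RDP_nonneg: "0 \<le> RDP M D P"
  unfolding RDP_def by (rule INF_greatest) (auto intro: MI_nonneg)

lemma RDP_less_top:
  assumes mom: "(\<integral>\<^sup>+x. ennreal (x\<^sup>2) \<partial>M) < \<infinity>" and D: "D > 0" and P: "P > 0"
  shows "RDP M D P < \<infinity>"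
proof -
  have W0: "W2sq M (out_law M (return borel)) \<le> ennreal 0"
    using W2sq_out_law_le_distortion[OF return_kernel] distortion_return by simp
  obtain g where g: "g \<in> borel_measurable borel" "finite (range g)"
    and d: "distortion M (map_kernel (return borel) g) \<le> ennreal (0 + min D P)"
    and w: "W2sq M (out_law M (map_kernel (return borel) g)) \<le> ennreal (0 + min D P)"
    using quantize_kernel[OF mom return_kernel _ _ W0, of 0 "min D P"] D P
    by (auto simp: distortion_return)
  define K where "K = map_kernel (return borel) g"
  have K: "K \<in> kernels" unfolding K_def by (rule map_kernel_kernels[OF return_kernel g(1)])
  have "RDP M D P \<le> MI M K"
  proof (unfold RDP_def, intro INF_lower CollectI conjI K)
    show "distortion M K \<le> ennreal D"
      using d unfolding K_def by (rule order_trans) (intro ennreal_leI, simp)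
    show "W2sq M (out_law M K) \<le> ennreal P"
      using w unfolding K_def by (rule order_trans) (intro ennreal_leI, simp)
  qed
  also have "MI M K < \<infinity>"
    unfolding K_def
    by (rule MI_finite_output_less_top[OF map_kernel_kernels[OF return_kernel g(1)] g(2)
          emeasure_map_kernel_range[OF return_kernel g]])
  finally show ?thesis .
qed

lemma nn_integral_Max_square_less_top:
  assumes mom: "(\<integral>\<^sup>+x. ennreal (x\<^sup>2) \<partial>M) < \<infinity>" and S: "finite S" "S \<noteq> {}"
  shows "(\<integral>\<^sup>+x. ennreal (Max ((\<lambda>s. (x - s)\<^sup>2) ` S)) \<partial>M) < \<infinity>"
proof -
  define C where "C = Max ((\<lambda>s. s\<^sup>2) ` S)"
  have C: "C \<ge> 0" unfolding C_def using S by (auto simp: Max_ge_iff)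
  have "Max ((\<lambda>s. (x - s)\<^sup>2) ` S) \<le> 2 * x\<^sup>2 + 2 * C" for x
  proof -
    have "(x - s)\<^sup>2 \<le> 2 * x\<^sup>2 + 2 * C" if "s \<in> S" for s
    proof -
      have "s\<^sup>2 \<le> C" unfolding C_def using S that by (intro Max_ge) auto
      then show ?thesis using square_add_le[of 1 x "- s"] by simp
    qed
    then show ?thesis using S by (simp add: Max_le_iff)
  qed
  then have "ennreal (Max ((\<lambda>s. (x - s)\<^sup>2) ` S)) \<le> 2 * ennreal (x\<^sup>2) + ennreal (2 * C)" for x
    using C ennreal_leI[of "Max ((\<lambda>s. (x - s)\<^sup>2) ` S)" "2 * x\<^sup>2 + 2 * C"]
    by (simp add: ennreal_mult ennreal_plus)
  then have "(\<integral>\<^sup>+x. ennreal (Max ((\<lambda>s. (x - s)\<^sup>2) ` S)) \<partial>M) \<le> (\<integral>\<^sup>+x. 2 * ennreal (x\<^sup>2) + ennreal (2 * C) \<partial>M)"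
    by (rule nn_integral_mono)
  also have "\<dots> = 2 * (\<integral>\<^sup>+x. ennreal (x\<^sup>2) \<partial>M) + ennreal (2 * C)"
    by (subst nn_integral_add) (auto simp: nn_integral_cmult emeasure_space_1[unfolded space_eq_univ])
  also have "\<dots> < \<infinity>" using mom by (simp add: ennreal_mult_eq_top_iff less_top[symmetric])
  finally show ?thesis .
qed

lemma W2sq_less_top_finite_support:
  assumes mom: "(\<integral>\<^sup>+x. ennreal (x\<^sup>2) \<partial>M) < \<infinity>" and S: "finite S" "S \<noteq> {}"
    and \<gamma>: "\<gamma> \<in> space (prob_algebra borel)" and \<gamma>S: "emeasure \<gamma> S = 1"
  shows "W2sq M \<gamma> < \<infinity>"
proof -
  interpret \<gamma>: real_distribution \<gamma>
    using \<gamma> by (simp add: space_prob_algebra real_distribution_def real_distribution_axioms_def)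
  have SB: "S \<in> sets \<gamma>" using S by (simp add: borel_closed finite_imp_closed)
  have "AE y in \<gamma>. y \<in> S"
    using \<gamma>S SB by (simp add: \<gamma>.AE_in_set_eq_1 \<gamma>.emeasure_eq_measure)
  then have "AE y in \<gamma>. ennreal ((x - y)\<^sup>2) \<le> ennreal (Max ((\<lambda>s. (x - s)\<^sup>2) ` S))" for x
    by eventually_elim (intro ennreal_leI Max_ge, use S in auto)
  then have inner: "(\<integral>\<^sup>+y. ennreal ((x - y)\<^sup>2) \<partial>\<gamma>) \<le> ennreal (Max ((\<lambda>s. (x - s)\<^sup>2) ` S))" for x
    using nn_integral_mono_AE[of _ _ \<gamma>] \<gamma>.emeasure_space_1 by fastforce
  have "W2sq M \<gamma> \<le> (\<integral>\<^sup>+z. ennreal ((fst z - snd z)\<^sup>2) \<partial>(M \<Otimes>\<^sub>M \<gamma>))"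
    unfolding W2sq_def
    by (rule INF_lower[OF pair_measure_coupling[OF real_distribution_axioms \<gamma>.real_distribution_axioms]])
  also have "\<dots> = (\<integral>\<^sup>+x. \<integral>\<^sup>+y. ennreal ((x - y)\<^sup>2) \<partial>\<gamma> \<partial>M)"
  proof -
    have "(\<lambda>z. ennreal ((fst z - snd z)\<^sup>2)) \<in> borel_measurable (M \<Otimes>\<^sub>M \<gamma>)"
      by (simp add: measurable_cong_sets[OF sets_pair_measure_cong[OF events_eq_borel \<gamma>.events_eq_borel] refl])
    from \<gamma>.nn_integral_fst[OF this] show ?thesis by simp
  qed
  also have "\<dots> \<le> (\<integral>\<^sup>+x. ennreal (Max ((\<lambda>s. (x - s)\<^sup>2) ` S)) \<partial>M)"
    by (intro nn_integral_mono inner)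
  also have "\<dots> < \<infinity>" by (rule nn_integral_Max_square_less_top[OF mom S])
  finally show ?thesis .
qed

lemma exists_finite_output_kernel:
  assumes mom: "(\<integral>\<^sup>+x. ennreal (x\<^sup>2) \<partial>M) < \<infinity>" and D: "D > 0" and P: "P > 0" and \<epsilon>: "\<epsilon> > 0"
  obtains K S where "K \<in> kernels" "finite S" "S \<noteq> {}" "emeasure (out_law M K) S = 1"
    "\<forall>s\<in>S. emeasure (out_law M K) {s} > 0" "MI M K \<le> RDP M D P + ereal \<epsilon>"
    "distortion M K \<le> ennreal (D + \<epsilon>)" "W2sq M (out_law M K) \<le> ennreal (P + \<epsilon>)"
proof -
  have "RDP M D P < RDP M D P + ereal \<epsilon>"
    using RDP_less_top[OF mom D P] RDP_nonneg \<epsilon> by (cases "RDP M D P") auto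
  then obtain K where K: "K \<in> kernels" and KD: "distortion M K \<le> ennreal D"
    and KP: "W2sq M (out_law M K) \<le> ennreal P" and KMI: "MI M K < RDP M D P + ereal \<epsilon>"
    unfolding RDP_def[of M D P] by (subst (asm) INF_less_iff) auto
  obtain g where g: "g \<in> borel_measurable borel" "finite (range g)"
    and gD: "distortion M (map_kernel K g) \<le> ennreal (D + \<epsilon>)"
    and gP: "W2sq M (out_law M (map_kernel K g)) \<le> ennreal (P + \<epsilon>)"
    using quantize_kernel[OF mom K KD _ KP _ \<epsilon>] D P by auto
  define K' where "K' = map_kernel K g"
  define S where "S = {t \<in> range g. emeasure (out_law M K') {t} > 0}"
  have K': "K' \<in> kernels" unfolding K'_def by (rule map_kernel_kernels[OF K g(1)])
  have "emeasure (out_law M K') (range g) = (\<integral>\<^sup>+x. emeasure (K' x) (range g) \<partial>M)"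
    using g(2) by (intro emeasure_out_law[OF K']) (simp add: borel_closed finite_imp_closed)
  also have "\<dots> = 1"
    by (simp add: K'_def emeasure_map_kernel_range[OF K g] emeasure_space_1[unfolded space_eq_univ])
  finally have S1: "emeasure (out_law M K') S = 1"
    unfolding S_def by (rule finite_atoms_full_measure[OF sets_out_law g(2)])
  show thesis
  proof (rule that[OF K'])
    show "finite S" "\<forall>s\<in>S. emeasure (out_law M K') {s} > 0" using g(2) by (auto simp: S_def)
    show "S \<noteq> {}" "emeasure (out_law M K') S = 1" using S1 by auto
    show "MI M K' \<le> RDP M D P + ereal \<epsilon>"
      using MI_map_kernel_le[OF K g] KMI by (simp add: K'_def)
  qed (use gD gP in \<open>simp_all add: K'_def\<close>)
qed

end

theorem mainTheorem13:
  fixes \<mu> :: "real measure"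
  assumes "prob_space \<mu>" and "sets \<mu> = sets borel"
    and "(\<integral>\<^sup>+ x. ennreal (x\<^sup>2) \<partial>\<mu>) < \<infinity>"
  shows "(\<forall>D P. D > 0 \<longrightarrow> P > 0 \<longrightarrow> RDP \<mu> D P < \<infinity>) \<and>
         (\<forall>D P \<epsilon>. D > 0 \<longrightarrow> P > 0 \<longrightarrow> \<epsilon> > 0 \<longrightarrow>
            (\<exists>K S. K \<in> kernels \<and> finite S
               \<and> emeasure (out_law \<mu> K) S = 1
               \<and> (\<forall>s\<in>S. emeasure (out_law \<mu> K) {s} > 0)
               \<and> MI \<mu> K \<le> RDP \<mu> D P + ereal \<epsilon>
               \<and> distortion \<mu> K \<le> ennreal (D + \<epsilon>)
               \<and> (\<integral>\<^sup>+ x. ennreal (Max ((\<lambda>s. (x - s)\<^sup>2) ` S)) \<partial>\<mu>) < \<infinity>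
               \<and> W2sq \<mu> (out_law \<mu> K) \<le> ennreal (P + \<epsilon>)
               \<and> (\<forall>\<gamma> \<in> space (prob_algebra borel). emeasure \<gamma> S = 1 \<longrightarrow> W2sq \<mu> \<gamma> < \<infinity>)))"
proof -
  interpret real_distribution \<mu>
    using assms(1,2) by (simp add: real_distribution_def real_distribution_axioms_def)
  note mom = assms(3)
  show ?thesis
    apply (intro conjI allI impI)
     apply (blast intro: RDP_less_top[OF mom])
    subgoal premises pos for D P \<epsilon>
    proof -
      obtain K S where "K \<in> kernels" "finite S" "S \<noteq> {}" "emeasure (out_law \<mu> K) S = 1"
        "\<forall>s\<in>S. emeasure (out_law \<mu> K) {s} > 0" "MI \<mu> K \<le> RDP \<mu> D P + ereal \<epsilon>"
        "distortion \<mu> K \<le> ennreal (D + \<epsilon>)" "W2sq \<mu> (out_law \<mu> K) \<le> ennreal (P + \<epsilon>)"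
        using exists_finite_output_kernel[OF mom pos] .
      with nn_integral_Max_square_less_top[OF mom] W2sq_less_top_finite_support[OF mom]
      show ?thesis by blast
    qed
    done
qed

end
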